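(* There exist maps $k\mapsto\Lambda_k\in\mathbb{R}^{p\times p}$, with $\Lambda_k$ a discrete-time interconnection for each $k\in\mathbb{N}$, and $Q:\mathbb{N}\to\overline{\mathcal Q}_n$ such that the system $\mathbf x^+=(I_{np}+(\Lambda_k-I_p)\otimes Q_k)\mathbf x$ has an unbounded solution.
   Context: $\otimes$ Kronecker product; $\overline{\mathcal Q}_n$ the set of symmetric positive semidefinite $n\times n$ matrices with induced 2-norm at most $1$. A discrete-time interconnection is $\Lambda=[\lambda_{ij}]$ with $\lambda_{ij}\ge0$ and $\sum_j\lambda_{ij}=1$ for all $i$. *)

theory Defs
  imports Complex_Main "Jordan_Normal_Form.Matrix"
begin

definition kron :: "'a::times mat \<Rightarrow> 'a mat \<Rightarrow> 'a mat" where
  "kron A B = mat (dim_row A * dim_row B) (dim_col A * dim_col B)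
     (\<lambda>(i,j). A $$ (i div dim_row B, j div dim_col B) * B $$ (i mod dim_row B, j mod dim_col B))"

definition vnorm :: "real vec \<Rightarrow> real" where
  "vnorm v = sqrt (v \<bullet> v)"

definition dt_interconnection :: "nat \<Rightarrow> real mat \<Rightarrow> bool" where
  "dt_interconnection p L \<longleftrightarrow> L \<in> carrier_mat p p \<and>
     (\<forall>i<p. \<forall>j<p. L $$ (i,j) \<ge> 0) \<and>
     (\<forall>i<p. (\<Sum>j<p. L $$ (i,j)) = 1)"

definition Qbar :: "nat \<Rightarrow> real mat set" where
  "Qbar n = {Q. Q \<in> carrier_mat n n \<and> transpose_mat Q = Q \<and>
     (\<forall>v\<in>carrier_vec n. v \<bullet> (Q *\<^sub>v v) \<ge> 0) \<and>
     (\<forall>v\<in>carrier_vec n. vnorm (Q *\<^sub>v v) \<le> vnorm v)}"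

end

theory Submission
  imports Defs
begin

text \<open>Three agents live in the plane; agent 2 sits at rest at (2, 2). At each step one agent i
  moves towards another agent j, but only along a prescribed line spanned by u: the update is
  x_i + P (x_j - x_i) with P the orthogonal projection onto u, a symmetric positive semidefinite
  matrix of norm at most 1. This is exactly one step of the system for the interconnection in which
  agent i copies agent j. Cycling through the three moves (0 towards 1 along (1, -1), 1 towards 0 along
  (0, 1), 1 towards 2 along (1, 1)) reproduces the configuration with agents 0 and 1 translated by
  (1, -1), so the solution drifts off linearly.\<close>

definition stack :: "nat \<Rightarrow> nat \<Rightarrow> (nat \<Rightarrow> 'a vec) \<Rightarrow> 'a vec" where
  "stack p n w = vec (p * n) (\<lambda>m. w (m div n) $ (m mod n))"

lemma dim_stack [simp]: "dim_vec (stack p n w) = p * n"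
  by (simp add: stack_def)

lemma index_stack [simp]: "m < p * n \<Longrightarrow> stack p n w $ m = w (m div n) $ (m mod n)"
  by (simp add: stack_def)

lemma stack_carrier_vec [simp]: "stack p n w \<in> carrier_vec (p * n)"
  by (rule carrier_vecI) simp

lemma stack_cong: "(\<And>r. r < p \<Longrightarrow> w r = w' r) \<Longrightarrow> stack p n w = stack p n w'"
  by (rule eq_vecI) (auto simp: stack_def less_mult_imp_div_less)

lemma mult_add_less_mult_nat: "c < q \<Longrightarrow> t < r \<Longrightarrow> c * r + t < q * r" for c q t r :: nat
proof -
  assume "c < q" "t < r"
  then have "c * r + t < Suc c * r" by simp
  also have "\<dots> \<le> q * r" using \<open>c < q\<close> by (intro mult_le_mono1) simp
  finally show ?thesis .
qed

lemma div_mod_less_of_less_mult: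
  "m < p * n \<Longrightarrow> m div n < p \<and> m mod n < n" for m p n :: nat
  by (metis less_mult_imp_div_less mod_less_divisor mult_0_right not_less0 gr0I)

lemma sum_lessThan_mult_nat:
  "(\<Sum>k<q * r. f k) = (\<Sum>c<q. \<Sum>t<r. f (c * r + t))" for f :: "nat \<Rightarrow> 'a::comm_monoid_add"
proof -
  have "(\<Sum>k<q * r. f k) = (\<Sum>(c, t)\<in>{..<q} \<times> {..<r}. f (c * r + t))"
    by (rule sum.reindex_bij_witness[where i = "\<lambda>(c, t). c * r + t" and j = "\<lambda>k. (k div r, k mod r)"])
       (auto simp: mult_add_less_mult_nat dest: div_mod_less_of_less_mult)
  also have "\<dots> = (\<Sum>c<q. \<Sum>t<r. f (c * r + t))"
    by (rule sum.cartesian_product[symmetric])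
  finally show ?thesis .
qed

lemma mult_mat_vec_nth:
  "A \<in> carrier_mat n m \<Longrightarrow> v \<in> carrier_vec m \<Longrightarrow> i < n \<Longrightarrow>
   (A *\<^sub>v v) $ i = (\<Sum>j<m. A $$ (i, j) * v $ j)"
  by (simp add: mult_mat_vec_def scalar_prod_def lessThan_atLeast0)

lemma dim_row_kron [simp]: "dim_row (kron A B) = dim_row A * dim_row B"
  by (simp add: kron_def)

lemma dim_col_kron [simp]: "dim_col (kron A B) = dim_col A * dim_col B"
  by (simp add: kron_def)

lemma index_kron:
  "i < dim_row A * dim_row B \<Longrightarrow> j < dim_col A * dim_col B \<Longrightarrow>
   kron A B $$ (i, j) = A $$ (i div dim_row B, j div dim_col B) * B $$ (i mod dim_row B, j mod dim_col B)"
  by (simp add: kron_def)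

lemma kron_carrier_mat:
  "A \<in> carrier_mat p q \<Longrightarrow> B \<in> carrier_mat n r \<Longrightarrow> kron A B \<in> carrier_mat (p * n) (q * r)"
  by (rule carrier_matI) simp_all

lemma kron_mult_stack_nth:
  assumes A: "A \<in> carrier_mat p q" and B: "B \<in> carrier_mat n r"
    and w: "\<And>c. c < q \<Longrightarrow> w c \<in> carrier_vec r" and m: "m < p * n"
  shows "(kron A B *\<^sub>v stack q r w) $ m = (\<Sum>c<q. A $$ (m div n, c) * (B *\<^sub>v w c) $ (m mod n))"
proof -
  have dims: "dim_row A = p" "dim_col A = q" "dim_row B = n" "dim_col B = r"
    using A B by auto
  have mn: "m mod n < n" using div_mod_less_of_less_mult[OF m] by simp
  have "(kron A B *\<^sub>v stack q r w) $ m = (\<Sum>k<q * r. kron A B $$ (m, k) * stack q r w $ k)"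
    by (rule mult_mat_vec_nth[OF kron_carrier_mat[OF A B] carrier_vecI m]) simp
  also have "\<dots> = (\<Sum>c<q. \<Sum>t<r. kron A B $$ (m, c * r + t) * stack q r w $ (c * r + t))"
    by (rule sum_lessThan_mult_nat)
  also have "\<dots> = (\<Sum>c<q. \<Sum>t<r. A $$ (m div n, c) * B $$ (m mod n, t) * w c $ t)"
    using m by (intro sum.cong refl) (simp add: index_kron dims stack_def mult_add_less_mult_nat)
  also have "\<dots> = (\<Sum>c<q. A $$ (m div n, c) * (B *\<^sub>v w c) $ (m mod n))"
    using mn by (intro sum.cong refl) (simp add: mult_mat_vec_nth[OF B w] sum_distrib_left mult.assoc)
  finally show ?thesis .
qed

definition copy_mat :: "nat \<Rightarrow> nat \<Rightarrow> nat \<Rightarrow> real mat" where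
  "copy_mat p i j = mat p p (\<lambda>(r, c). if r = i then of_bool (c = j) else of_bool (c = r))"

lemma dt_interconnection_copy_mat:
  assumes "j < p" shows "dt_interconnection p (copy_mat p i j)"
proof -
  have "(\<Sum>c<p. copy_mat p i j $$ (r, c)) = 1" if "r < p" for r
    using that assms by (cases "r = i") (simp_all add: copy_mat_def of_bool_def)
  then show ?thesis by (simp add: dt_interconnection_def copy_mat_def)
qed

lemma copy_step_stack:
  assumes ij: "i < p" "j < p" and Q: "Q \<in> carrier_mat n n"
    and w: "\<And>r. r < p \<Longrightarrow> w r \<in> carrier_vec n"
  shows "(1\<^sub>m (n * p) + kron (copy_mat p i j - 1\<^sub>m p) Q) *\<^sub>v stack p n w =
    stack p n (w(i := w i + Q *\<^sub>v (w j - w i)))"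
    (is "(1\<^sub>m (n * p) + ?K) *\<^sub>v ?x = ?y")
proof -
  have dQ: "dim_row Q = n" "dim_col Q = n"
    using Q by auto
  have C: "copy_mat p i j - 1\<^sub>m p \<in> carrier_mat p p"
    by (rule carrier_matI) simp_all
  have K: "?K \<in> carrier_mat (p * n) (p * n)"
    by (rule kron_carrier_mat[OF C Q])
  have "(1\<^sub>m (n * p) + ?K) *\<^sub>v ?x = 1\<^sub>m (p * n) *\<^sub>v ?x + ?K *\<^sub>v ?x"
    unfolding mult.commute[of n p] by (rule add_mult_distrib_mat_vec[OF one_carrier_mat K]) simp
  then have split: "(1\<^sub>m (n * p) + ?K) *\<^sub>v ?x = ?x + ?K *\<^sub>v ?x"
    by simp
  show ?thesis
  proof (rule eq_vecI)
    fix m assume "m < dim_vec ?y"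
    then have m: "m < p * n" by simp
    then have mn: "m div n < p" "m mod n < n"
      using div_mod_less_of_less_mult by blast+
    have "(?K *\<^sub>v ?x) $ m = (\<Sum>c<p. (copy_mat p i j - 1\<^sub>m p) $$ (m div n, c) * (Q *\<^sub>v w c) $ (m mod n))"
      by (rule kron_mult_stack_nth[OF C Q w m])
    also have "\<dots> = (if m div n = i then (Q *\<^sub>v w j) $ (m mod n) - (Q *\<^sub>v w i) $ (m mod n) else 0)"
      using ij mn by (simp add: copy_mat_def left_diff_distrib sum_subtractf
          if_distrib[of "\<lambda>x. x * _"] sum.delta' cong: if_cong)
    also have "\<dots> = (if m div n = i then (Q *\<^sub>v (w j - w i)) $ (m mod n) else 0)"
      using mult_minus_distrib_mat_vec[OF Q w[OF ij(2)] w[OF ij(1)]] mn dQ by simp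
    finally have Kx: "(?K *\<^sub>v ?x) $ m = (if m div n = i then (Q *\<^sub>v (w j - w i)) $ (m mod n) else 0)" .
    have "((1\<^sub>m (n * p) + ?K) *\<^sub>v ?x) $ m = ?x $ m + (?K *\<^sub>v ?x) $ m"
      unfolding split using m dQ by (intro index_add_vec) auto
    then show "((1\<^sub>m (n * p) + ?K) *\<^sub>v ?x) $ m = ?y $ m"
      using Kx m mn dQ by simp
  qed (simp add: split dQ)
qed

lemma scalar_prod_self_nonneg: "0 \<le> v \<bullet> (v :: real vec)"
  by (simp add: scalar_prod_def sum_nonneg)

lemma abs_nth_le_vnorm:
  assumes "i < dim_vec v" shows "\<bar>v $ i\<bar> \<le> vnorm v"
proof -
  have "(v $ i)\<^sup>2 \<le> (\<Sum>j<dim_vec v. (v $ j)\<^sup>2)"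
    using assms by (intro member_le_sum) auto
  also have "\<dots> = v \<bullet> v"
    by (simp add: scalar_prod_def lessThan_atLeast0 power2_eq_square)
  finally show ?thesis
    unfolding vnorm_def by (metis real_sqrt_abs real_sqrt_le_mono)
qed

text \<open>Orthogonal projection onto the span of u. For u = 0 the division by \<open>u \<bullet> u = 0\<close>
  makes it the zero matrix, which still lies in \<open>Qbar\<close>.\<close>

definition line_proj :: "real vec \<Rightarrow> real mat" where
  "line_proj u = mat (dim_vec u) (dim_vec u) (\<lambda>(r, c). u $ r * u $ c / (u \<bullet> u))"

lemma line_proj_carrier_mat: "line_proj u \<in> carrier_mat (dim_vec u) (dim_vec u)"
  by (simp add: line_proj_def)

lemma line_proj_mult_vec:
  assumes "v \<in> carrier_vec (dim_vec u)"
  shows "line_proj u *\<^sub>v v = ((u \<bullet> v) / (u \<bullet> u)) \<cdot>\<^sub>v u"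
proof (rule eq_vecI)
  fix r assume "r < dim_vec ((u \<bullet> v) / (u \<bullet> u) \<cdot>\<^sub>v u)"
  then have r: "r < dim_vec u" by simp
  have "(line_proj u *\<^sub>v v) $ r = (\<Sum>c<dim_vec u. u $ r * u $ c / (u \<bullet> u) * v $ c)"
    using assms r by (subst mult_mat_vec_nth[where m = "dim_vec u"]) (auto simp: line_proj_def)
  also have "\<dots> = (u \<bullet> v) / (u \<bullet> u) * u $ r"
    using assms by (simp add: scalar_prod_def lessThan_atLeast0 sum_distrib_left sum_divide_distrib
        algebra_simps)
  finally show "(line_proj u *\<^sub>v v) $ r = ((u \<bullet> v) / (u \<bullet> u) \<cdot>\<^sub>v u) $ r"
    using r by simp
qed (simp add: line_proj_def)

lemma line_proj_in_Qbar: "line_proj u \<in> Qbar (dim_vec u)"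
proof -
  have psd: "0 \<le> v \<bullet> (line_proj u *\<^sub>v v)" if v: "v \<in> carrier_vec (dim_vec u)" for v
  proof -
    have "v \<bullet> (line_proj u *\<^sub>v v) = (u \<bullet> v)\<^sup>2 / (u \<bullet> u)"
      using v by (simp add: line_proj_mult_vec comm_scalar_prod[of v _ u] power2_eq_square)
    then show ?thesis by (simp add: scalar_prod_self_nonneg)
  qed
  have contract: "vnorm (line_proj u *\<^sub>v v) \<le> vnorm v" if v: "v \<in> carrier_vec (dim_vec u)" for v
  proof -
    define t where "t = (u \<bullet> v) / (u \<bullet> u)"
    have u: "u \<in> carrier_vec (dim_vec u)" by simp
    have "(t \<cdot>\<^sub>v u) \<bullet> (t \<cdot>\<^sub>v u) \<le> v \<bullet> v"
    proof (cases "u \<bullet> u = 0")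
      case True
      then show ?thesis by (simp add: t_def scalar_prod_self_nonneg)
    next
      case False
      then have tu: "t * (u \<bullet> u) = u \<bullet> v" by (simp add: t_def)
      have "(v - t \<cdot>\<^sub>v u) \<bullet> (v - t \<cdot>\<^sub>v u) = v \<bullet> v - 2 * t * (u \<bullet> v) + t * (t * (u \<bullet> u))"
        using u v by (simp add: minus_scalar_prod_distrib[where n = "dim_vec u"]
            scalar_prod_minus_distrib[where n = "dim_vec u"] comm_scalar_prod[OF v u] algebra_simps)
      also have "\<dots> = v \<bullet> v - (t \<cdot>\<^sub>v u) \<bullet> (t \<cdot>\<^sub>v u)"
        using u by (simp add: tu)
      finally show ?thesis using scalar_prod_self_nonneg[of "v - t \<cdot>\<^sub>v u"] by linarith
    qed
    then show ?thesis
      using v by (simp add: vnorm_def line_proj_mult_vec t_def)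
  qed
  have "transpose_mat (line_proj u) = line_proj u"
    by (rule eq_matI) (auto simp: line_proj_def)
  with psd contract show ?thesis
    by (simp add: Qbar_def line_proj_def)
qed

definition vec2 :: "real \<Rightarrow> real \<Rightarrow> real vec" where
  "vec2 a b = vec 2 (\<lambda>i. if i = 0 then a else b)"

lemma vec2_carrier_vec [simp]: "vec2 a b \<in> carrier_vec 2"
  by (simp add: vec2_def)

lemma dim_vec2 [simp]: "dim_vec (vec2 a b) = 2"
  by (simp add: vec2_def)

lemma vec2_nth_0 [simp]: "vec2 a b $ 0 = a"
  by (simp add: vec2_def)

lemma vec2_nth_1 [simp]: "vec2 a b $ 1 = b"
  by (simp add: vec2_def)

lemma vec2_add [simp]: "vec2 a b + vec2 c d = vec2 (a + c) (b + d)"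
  by (rule eq_vecI) (simp_all add: vec2_def)

lemma vec2_diff [simp]: "vec2 a b - vec2 c d = vec2 (a - c) (b - d)"
  by (rule eq_vecI) (simp_all add: vec2_def)

lemma smult_vec2 [simp]: "t \<cdot>\<^sub>v vec2 a b = vec2 (t * a) (t * b)"
  by (rule eq_vecI) (simp_all add: vec2_def)

lemma scalar_prod_vec2 [simp]: "vec2 a b \<bullet> vec2 c d = a * c + b * d"
  by (simp add: vec2_def scalar_prod_def numeral_2_eq_2)

lemma vec2_eq_iff [simp]: "vec2 a b = vec2 c d \<longleftrightarrow> a = c \<and> b = d"
  by (metis vec2_nth_0 vec2_nth_1)

definition drift_edge :: "nat \<Rightarrow> nat \<times> nat" where
  "drift_edge k = [(0, 1), (1, 0), (1, 2)] ! (k mod 3)"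

definition drift_dir :: "nat \<Rightarrow> real vec" where
  "drift_dir k = [vec2 1 (-1), vec2 0 1, vec2 1 1] ! (k mod 3)"

definition drift_agents :: "nat \<Rightarrow> nat \<Rightarrow> real vec" where
  "drift_agents k r = (let c = real (k div 3) in
     [[vec2 c (- c), vec2 (c + 3) (1 - c), vec2 2 2],
      [vec2 (c + 1) (- c - 1), vec2 (c + 3) (1 - c), vec2 2 2],
      [vec2 (c + 1) (- c - 1), vec2 (c + 3) (- c - 1), vec2 2 2]] ! (k mod 3) ! r)"

definition drift_L :: "nat \<Rightarrow> real mat" where
  "drift_L k = copy_mat 3 (fst (drift_edge k)) (snd (drift_edge k))"

definition drift_Q :: "nat \<Rightarrow> real mat" where
  "drift_Q k = line_proj (drift_dir k)"

definition drift_state :: "nat \<Rightarrow> real vec" where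
  "drift_state k = stack 3 2 (drift_agents k)"

lemma drift_edge_less: "fst (drift_edge k) < 3" "snd (drift_edge k) < 3"
proof -
  have "drift_edge k \<in> set [(0, 1), (1, 0), (1, 2)]"
    unfolding drift_edge_def by (rule nth_mem) simp
  then show "fst (drift_edge k) < 3" "snd (drift_edge k) < 3" by auto
qed

lemma dim_drift_dir: "dim_vec (drift_dir k) = 2"
proof -
  have "drift_dir k \<in> set [vec2 1 (-1), vec2 0 1, vec2 1 1]"
    unfolding drift_dir_def by (rule nth_mem) simp
  then show ?thesis by auto
qed

lemma drift_agents_carrier_vec:
  assumes "r < 3" shows "drift_agents k r \<in> carrier_vec 2"
proof -
  have "k mod 3 = 0 \<or> k mod 3 = 1 \<or> k mod 3 = 2" "r = 0 \<or> r = 1 \<or> r = 2"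
    using assms by linarith+
  then show ?thesis by (auto simp: drift_agents_def Let_def)
qed

lemma drift_agents_Suc:
  assumes r: "r < 3" and e: "drift_edge k = (i, j)"
  shows "drift_agents (Suc k) r =
    ((drift_agents k)(i := drift_agents k i + drift_Q k *\<^sub>v (drift_agents k j - drift_agents k i))) r"
proof -
  have "k mod 3 = 0 \<or> k mod 3 = 1 \<or> k mod 3 = 2" by linarith
  then consider "k mod 3 = 0" "Suc k mod 3 = 1" "Suc k div 3 = k div 3"
    | "k mod 3 = 1" "Suc k mod 3 = 2" "Suc k div 3 = k div 3"
    | "k mod 3 = 2" "Suc k mod 3 = 0" "Suc k div 3 = Suc (k div 3)"
    by (elim disjE) (auto simp: mod_Suc div_Suc)
  moreover have "r = 0 \<or> r = 1 \<or> r = 2"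
    using r by linarith
  ultimately show ?thesis
    using e by cases (auto simp: drift_agents_def drift_edge_def drift_Q_def drift_dir_def line_proj_mult_vec
        Let_def field_simps)
qed

lemma drift_step:
  "drift_state (Suc k) = (1\<^sub>m (2 * 3) + kron (drift_L k - 1\<^sub>m 3) (drift_Q k)) *\<^sub>v drift_state k"
proof -
  obtain i j where e: "drift_edge k = (i, j)" by fastforce
  have ij: "i < 3" "j < 3" using drift_edge_less[of k] e by simp_all
  have Q: "drift_Q k \<in> carrier_mat 2 2"
    using line_proj_carrier_mat[of "drift_dir k"] by (simp add: drift_Q_def dim_drift_dir)
  show ?thesis
    unfolding drift_state_def drift_L_def e fst_conv snd_conv
    by (rule trans[OF stack_cong copy_step_stack[OF ij Q drift_agents_carrier_vec, symmetric]])
      (rule drift_agents_Suc[OF _ e])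
qed

lemma drift_state_unbounded: "\<not> (\<exists>B. \<forall>k. vnorm (drift_state k) \<le> B)"
proof
  assume "\<exists>B. \<forall>k. vnorm (drift_state k) \<le> B"
  then obtain B where B: "\<And>k. vnorm (drift_state k) \<le> B" by blast
  obtain m :: nat where "B < real m" using reals_Archimedean2 by blast
  moreover have "drift_state (3 * m) $ 0 = real m"
    by (simp add: drift_state_def drift_agents_def Let_def)
  then have "\<bar>real m\<bar> \<le> vnorm (drift_state (3 * m))"
    using abs_nth_le_vnorm[of 0 "drift_state (3 * m)"] by (simp add: drift_state_def)
  ultimately show False using B[of "3 * m"] by linarith
qed

theorem theorem14:
  shows "\<exists>(p::nat) (n::nat) (L::nat \<Rightarrow> real mat) (Q::nat \<Rightarrow> real mat) (x::nat \<Rightarrow> real vec).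
           (\<forall>k. dt_interconnection p (L k)) \<and>
           (\<forall>k. Q k \<in> Qbar n) \<and>
           (\<forall>k. x k \<in> carrier_vec (n * p)) \<and>
           (\<forall>k. x (Suc k) = (1\<^sub>m (n * p) + kron (L k - 1\<^sub>m p) (Q k)) *\<^sub>v x k) \<and>
           \<not> (\<exists>B. \<forall>k. vnorm (x k) \<le> B)"
proof (intro exI conjI allI)
  show "dt_interconnection 3 (drift_L k)" for k
    unfolding drift_L_def by (rule dt_interconnection_copy_mat[OF drift_edge_less(2)])
  show "drift_Q k \<in> Qbar 2" for k
    using line_proj_in_Qbar[of "drift_dir k"] by (simp add: drift_Q_def dim_drift_dir)
  show "drift_state k \<in> carrier_vec (2 * 3)" for k
    unfolding drift_state_def by (rule carrier_vecI) simp
  show "drift_state (Suc k) = (1\<^sub>m (2 * 3) + kron (drift_L k - 1\<^sub>m 3) (drift_Q k)) *\<^sub>v drift_state k" for k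
    by (rule drift_step)
  show "\<not> (\<exists>B. \<forall>k. vnorm (drift_state k) \<le> B)"
    by (rule drift_state_unbounded)
qed

end
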